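(* Let $k\in\mathbb{N}$ and let $\psi$ be a complex-valued function on $T$. The following are equivalent: (a) $M_\psi$ is bounded on $\mathcal{L}^{(k)}$; (b) $M_\psi$ is bounded on $\mathcal{L}^{(k)}_0$; (c) $\psi\in L^\infty\cap \mathcal{L}^{(k+1)}$. Furthermore, under these conditions, the operator norm $\|M_\psi\|$ satisfies $$\max\{\|\psi\|_\infty,\|\psi\|_k\}\le \|M_\psi\|\le \|\psi\|_\infty+\sup_{v\in T^*}|v|\prod_{j=1}^{k}\ell_j(|v|)\,D\psi(v).$$
   Context: $T$ is a tree (locally finite, connected, simply connected graph, identified with its vertex set) without terminal vertices, rooted at a vertex $o$. For $v\in T$, $|v|$ is the number of edges of the path from $o$ to $v$; for $v\ne o$, $v^-$ denotes the neighbor of $v$ on the path from $o$ to $v$ (the parent of $v$). $T^*=T\setminus\{o\}$. For a function $f:T\to\mathbb{C}$ and $v\in T^*$, $Df(v)=|f(v)-f(v^-)|$. For $x\ge1$ define $\ell_0(x)=1$, $\ell_1(x)=1+\ln x$, and $\ell_j(x)=1+\ln\ell_{j-1}(x)$ for $j\ge2$. For $k\in\mathbb{N}$, $\mathcal{L}^{(k)}$ is the set of $f:T\to\mathbb{C}$ with $\sup_{v\in T^*}|v|\prod_{j=0}^{k-1}\ell_j(|v|)Df(v)<\infty$, with norm $\|f\|_k=|f(o)|+\sup_{v\in T^*}|v|\prod_{j=0}^{k-1}\ell_j(|v|)Df(v)$. $\mathcal{L}^{(k)}_0$ is the subspace of $f\in\mathcal{L}^{(k)}$ with $\lim_{|v|\to\infty}|v|\prod_{j=0}^{k-1}\ell_j(|v|)Df(v)=0$.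 $L^\infty$ is the space of bounded functions on $T$ with $\|f\|_\infty=\sup_{v\in T}|f(v)|$. $M_\psi f=\psi f$ is the multiplication operator with symbol $\psi$; $\|M_\psi\|$ denotes its operator norm on the space ($\mathcal{L}^{(k)}$ or $\mathcal{L}^{(k)}_0$) on which it acts. *)

theory Defs
  imports "HOL-Analysis.Analysis"
begin

text \<open>A rooted tree on the vertex type 'v (vertex set = UNIV), given by its root
  r and its parent map par (convention: par r = r).\<close>

definition neighbors :: "'v \<Rightarrow> ('v \<Rightarrow> 'v) \<Rightarrow> 'v \<Rightarrow> 'v set" where
  "neighbors r par v = {w. w \<noteq> r \<and> par w = v} \<union> (if v = r then {} else {par v})"

definition rooted_tree :: "'v \<Rightarrow> ('v \<Rightarrow> 'v) \<Rightarrow> bool" where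
  "rooted_tree r par \<longleftrightarrow>
     par r = r \<and>
     (\<forall>v. \<exists>n. (par ^^ n) v = r) \<and>
     (\<forall>v. finite (neighbors r par v)) \<and>
     (\<forall>v. card (neighbors r par v) \<noteq> 1)"

definition depth :: "'v \<Rightarrow> ('v \<Rightarrow> 'v) \<Rightarrow> 'v \<Rightarrow> nat" where
  "depth r par v = (LEAST n. (par ^^ n) v = r)"

fun ell :: "nat \<Rightarrow> real \<Rightarrow> real" where
  "ell 0 x = 1"
| "ell (Suc 0) x = 1 + ln x"
| "ell (Suc (Suc j)) x = 1 + ln (ell (Suc j) x)"

definition Dif :: "('v \<Rightarrow> 'v) \<Rightarrow> ('v \<Rightarrow> complex) \<Rightarrow> 'v \<Rightarrow> real" where
  "Dif par f v = cmod (f v - f (par v))"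

definition wdiff :: "'v \<Rightarrow> ('v \<Rightarrow> 'v) \<Rightarrow> nat \<Rightarrow> ('v \<Rightarrow> complex) \<Rightarrow> 'v \<Rightarrow> real" where
  "wdiff r par k f v =
     real (depth r par v) * (\<Prod>j<k. ell j (real (depth r par v))) * Dif par f v"

definition Lk :: "'v \<Rightarrow> ('v \<Rightarrow> 'v) \<Rightarrow> nat \<Rightarrow> ('v \<Rightarrow> complex) set" where
  "Lk r par k = {f. bdd_above (wdiff r par k f ` (UNIV - {r}))}"

text \<open>The supremum is taken over T* together with 0 (all values are nonnegative,
  so this only matters when T* is empty).\<close>
definition normk :: "'v \<Rightarrow> ('v \<Rightarrow> 'v) \<Rightarrow> nat \<Rightarrow> ('v \<Rightarrow> complex) \<Rightarrow> real" where
  "normk r par k f = cmod (f r) + Sup (insert 0 (wdiff r par k f ` (UNIV - {r})))"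

definition Lk0 :: "'v \<Rightarrow> ('v \<Rightarrow> 'v) \<Rightarrow> nat \<Rightarrow> ('v \<Rightarrow> complex) set" where
  "Lk0 r par k = {f \<in> Lk r par k.
      \<forall>\<epsilon>>0. \<exists>N. \<forall>v. v \<noteq> r \<and> depth r par v \<ge> N \<longrightarrow> wdiff r par k f v < \<epsilon>}"

definition Linf :: "('v \<Rightarrow> complex) set" where
  "Linf = {f. bounded (range f)}"

definition supnorm :: "('v \<Rightarrow> complex) \<Rightarrow> real" where
  "supnorm f = (SUP v. cmod (f v))"

definition mult_bounded_on :: "('v \<Rightarrow> complex) set \<Rightarrow> (('v \<Rightarrow> complex) \<Rightarrow> real)
    \<Rightarrow> ('v \<Rightarrow> complex) \<Rightarrow> bool" where
  "mult_bounded_on X N \<psi> \<longleftrightarrow>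
     (\<forall>f\<in>X. (\<lambda>v. \<psi> v * f v) \<in> X) \<and>
     (\<exists>C. \<forall>f\<in>X. N (\<lambda>v. \<psi> v * f v) \<le> C * N f)"

definition mult_opnorm :: "('v \<Rightarrow> complex) set \<Rightarrow> (('v \<Rightarrow> complex) \<Rightarrow> real)
    \<Rightarrow> ('v \<Rightarrow> complex) \<Rightarrow> real" where
  "mult_opnorm X N \<psi> = (SUP f\<in>X - {\<lambda>v. 0}. N (\<lambda>v. \<psi> v * f v) / N f)"

end

theory Submission
  imports Defs
begin

text \<open>Write W_k(n) = n ell_0(n) ... ell_{k-1}(n). The iterated logarithm ell_k is, up to the
  factor 2^(k+1), a discrete primitive of 1/W_k: its increment from n to n+1 lies between
  1/W_k(n+1) and 2^(k+1)/W_k(n+1). Summing along the path from the root therefore gives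
  |f(v)| <= ||f||_k ell_k(|v|) on L^(k), and |f(v)| = o(ell_k(|v|)) on L^(k)_0.
  Together with the discrete product rule D(psi f)(v) <= |psi(v)| Df(v) + |f(v^-)| Dpsi(v)
  this shows that every psi in L^oo and L^(k+1) multiplies both spaces boundedly, with the
  stated norm bound. Conversely, if M_psi is bounded by C then ||psi^n||_k <= C^n, and the
  growth estimate forces |psi| <= C; testing M_psi on the truncations ell_k(min(|v|, N)),
  which lie in L^(k)_0 with uniformly bounded norms, gives psi in L^(k+1). The lower bound
  ||psi||_k for the operator norm comes from testing on the constant 1.\<close>

definition ell_prod :: "nat \<Rightarrow> real \<Rightarrow> real" where
  "ell_prod j x = (\<Prod>i<j. ell i x)"

lemma ell_at_0 [simp]: "ell j 0 = 1"
  by (induction j "0::real" rule: ell.induct) auto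

lemma ell_at_1 [simp]: "ell j 1 = 1"
  by (induction j "1::real" rule: ell.induct) auto

lemma ell_Suc: "j \<ge> 1 \<Longrightarrow> ell (Suc j) x = 1 + ln (ell j x)"
  by (cases j) auto

lemma ell_ge_1: "x \<ge> 1 \<Longrightarrow> ell j x \<ge> 1"
  by (induction j x rule: ell.induct) auto

lemma ell_of_nat_ge_1: "ell j (real n) \<ge> 1"
  by (cases "n = 0") (auto intro: ell_ge_1)

lemma ell_prod_ge_1: "x \<ge> 1 \<Longrightarrow> ell_prod j x \<ge> 1"
  unfolding ell_prod_def by (rule prod_ge_1) (auto intro: ell_ge_1)

lemma ell_prod_of_nat_ge_1: "ell_prod j (real n) \<ge> 1"
  unfolding ell_prod_def by (rule prod_ge_1) (auto intro: ell_of_nat_ge_1)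

lemma ell_prod_Suc: "ell_prod (Suc j) x = ell_prod j x * ell j x"
  unfolding ell_prod_def by simp

lemma ln_diff_bounds:
  fixes a b :: real
  assumes "0 < a" "a \<le> b"
  shows "(b - a) / b \<le> ln b - ln a" and "ln b - ln a \<le> (b - a) / a"
proof -
  have "ln (a / b) \<le> a / b - 1" and "ln (b / a) \<le> b / a - 1"
    using assms by (auto intro: ln_le_minus_one)
  then show "(b - a) / b \<le> ln b - ln a" and "ln b - ln a \<le> (b - a) / a"
    using assms by (simp_all add: ln_div diff_divide_distrib)
qed

text \<open>The discrete analogue of ell_j' = 1/(x ell_0 ... ell_{j-1}), obtained by iterating the
  bounds for ln through the chain rule.\<close>

lemma ell_diff_bounds:
  assumes "1 \<le> x" "x \<le> y" "j \<ge> 1"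
  shows "(y - x) / (y * ell_prod j y) \<le> ell j y - ell j x
       \<and> ell j y - ell j x \<le> (y - x) / (x * ell_prod j x)"
  using assms(3)
proof (induction j rule: dec_induct)
  case base
  then show ?case
    using ln_diff_bounds[of x y] assms by (simp add: ell_prod_def)
next
  case (step j)
  define a where "a = ell j x"
  define b where "b = ell j y"
  have a1: "a \<ge> 1"
    unfolding a_def using assms by (intro ell_ge_1) auto
  have "0 < y * ell_prod j y"
    using ell_prod_ge_1[of y j] assms by simp
  then have "0 \<le> (y - x) / (y * ell_prod j y)"
    using assms by simp
  moreover have lower: "(y - x) / (y * ell_prod j y) \<le> b - a"
    and upper: "b - a \<le> (y - x) / (x * ell_prod j x)"
    using step.IH unfolding a_def b_def by auto
  ultimately have ab: "a \<le> b"
    by linarith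
  have ell_Suc_diff: "ell (Suc j) y - ell (Suc j) x = ln b - ln a"
    using step.hyps unfolding a_def b_def by (simp add: ell_Suc)
  have "(y - x) / (y * ell_prod (Suc j) y) = ((y - x) / (y * ell_prod j y)) / b"
    by (simp add: ell_prod_Suc b_def mult.assoc)
  also have "\<dots> \<le> (b - a) / b"
    using lower a1 ab by (intro divide_right_mono) auto
  also have "\<dots> \<le> ln b - ln a"
    using a1 ab by (intro ln_diff_bounds) auto
  finally have "(y - x) / (y * ell_prod (Suc j) y) \<le> ell (Suc j) y - ell (Suc j) x"
    using ell_Suc_diff by simp
  note lower_Suc = this
  have "ln b - ln a \<le> (b - a) / a"
    using a1 ab by (intro ln_diff_bounds) auto
  also have "\<dots> \<le> ((y - x) / (x * ell_prod j x)) / a"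
    using upper a1 by (intro divide_right_mono) auto
  also have "\<dots> = (y - x) / (x * ell_prod (Suc j) x)"
    by (simp add: ell_prod_Suc a_def mult.assoc)
  finally show ?case
    using ell_Suc_diff lower_Suc by simp
qed

lemma ell_mono:
  assumes "1 \<le> x" "x \<le> y"
  shows "ell j x \<le> ell j y"
proof (cases "j = 0")
  case False
  have "0 \<le> (y - x) / (y * ell_prod j y)"
    using ell_prod_ge_1[of y j] assms by auto
  then show ?thesis
    using ell_diff_bounds[OF assms, of j] False by linarith
qed simp

lemma ell_mono_nat: "m \<le> n \<Longrightarrow> ell j (real m) \<le> ell j (real n)"
  by (cases "m = 0") (auto intro!: ell_mono simp: ell_of_nat_ge_1[of j n, simplified])

lemma filterlim_ell_at_top:
  assumes "j \<ge> 1"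
  shows "filterlim (ell j) at_top at_top"
  using assms
proof (induction j rule: dec_induct)
  case base
  show ?case
    by (simp add: filterlim_tendsto_add_at_top[OF tendsto_const ln_at_top])
next
  case (step j)
  have "filterlim (\<lambda>x. 1 + ln (ell j x)) at_top at_top"
    by (rule filterlim_tendsto_add_at_top[OF tendsto_const filterlim_compose[OF ln_at_top step.IH]])
  then show ?case
    using step.hyps by (simp add: ell_Suc)
qed

lemma ell_increment_ge:
  assumes "n \<ge> 1" "j \<ge> 1"
  shows "1 / (real (Suc n) * ell_prod j (real (Suc n))) \<le> ell j (real (Suc n)) - ell j (real n)"
  using ell_diff_bounds[of "real n" "real (Suc n)" j] assms by auto

lemma ell_increment_le:
  assumes "n \<ge> 1"
  shows "ell j (real (Suc n)) - ell j (real n) \<le> 1 / (real n * ell_prod j (real n))"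
  using ell_diff_bounds[of "real n" "real (Suc n)" j] assms
  by (cases "j = 0") (auto simp: ell_prod_def)

lemma ell_prod_Suc_le:
  assumes "n \<ge> 1"
  shows "ell_prod j (real (Suc n)) \<le> 2 ^ j * ell_prod j (real n)"
proof -
  have "ell i (real (Suc n)) \<le> 2 * ell i (real n)" for i
  proof -
    have "1 \<le> real n * ell_prod i (real n)"
      using ell_prod_of_nat_ge_1[of i n] assms by (metis mult_mono' mult_1 of_nat_1 of_nat_le_iff zero_le_one)
    then have "1 / (real n * ell_prod i (real n)) \<le> 1"
      by simp
    then have "ell i (real (Suc n)) - ell i (real n) \<le> 1"
      using ell_increment_le[OF assms, of i] by linarith
    then show ?thesis
      using ell_of_nat_ge_1[of i n] by linarith
  qed
  then have "ell_prod j (real (Suc n)) \<le> (\<Prod>i<j. 2 * ell i (real n))"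
    unfolding ell_prod_def by (intro prod_mono) (use ell_of_nat_ge_1 order_trans zero_le_one in blast)
  also have "\<dots> = 2 ^ j * ell_prod j (real n)"
    by (simp add: prod.distrib ell_prod_def)
  finally show ?thesis .
qed

lemma weighted_ell_increment_le:
  assumes "n \<ge> 1"
  shows "real (Suc n) * ell_prod j (real (Suc n)) * (ell j (real (Suc n)) - ell j (real n))
           \<le> 2 ^ Suc j"
proof -
  have P: "ell_prod j (real n) \<ge> 1"
    by (rule ell_prod_of_nat_ge_1)
  have "real (Suc n) * ell_prod j (real (Suc n)) \<le> (2 * real n) * (2 ^ j * ell_prod j (real n))"
    using ell_prod_Suc_le[OF assms, of j] assms ell_prod_of_nat_ge_1[of j "Suc n"]
    by (intro mult_mono) auto
  moreover have "0 \<le> ell j (real (Suc n)) - ell j (real n)"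
    using ell_mono_nat[of n "Suc n" j] by simp
  ultimately have "real (Suc n) * ell_prod j (real (Suc n)) * (ell j (real (Suc n)) - ell j (real n))
      \<le> (2 * real n) * (2 ^ j * ell_prod j (real n)) * (1 / (real n * ell_prod j (real n)))"
    using ell_increment_le[OF assms, of j] P ell_prod_of_nat_ge_1[of j "Suc n"]
    by (rule_tac mult_mono) auto
  also have "\<dots> = 2 ^ Suc j"
    using assms P by (simp add: field_simps)
  finally show ?thesis .
qed

lemma Dif_nonneg: "Dif par f v \<ge> 0"
  unfolding Dif_def by simp

lemma norm_le_norm_par_add_Dif: "cmod (f v) \<le> cmod (f (par v)) + Dif par f v"
  unfolding Dif_def by (metis norm_triangle_ineq2 add.commute diff_le_eq)

lemma Dif_mult_le:
  "Dif par (\<lambda>u. \<psi> u * f u) v \<le> cmod (\<psi> v) * Dif par f v + cmod (f (par v)) * Dif par \<psi> v"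
proof -
  have "\<psi> v * f v - \<psi> (par v) * f (par v)
      = \<psi> v * (f v - f (par v)) + f (par v) * (\<psi> v - \<psi> (par v))"
    by (simp add: algebra_simps)
  then show ?thesis
    unfolding Dif_def by (metis norm_mult norm_triangle_ineq)
qed

lemma norm_mult_Dif_le:
  "cmod (f v) * Dif par \<psi> v \<le> Dif par (\<lambda>u. \<psi> u * f u) v + cmod (\<psi> (par v)) * Dif par f v"
proof -
  have "f v * (\<psi> v - \<psi> (par v))
      = (\<psi> v * f v - \<psi> (par v) * f (par v)) - \<psi> (par v) * (f v - f (par v))"
    by (simp add: algebra_simps)
  then show ?thesis
    unfolding Dif_def by (metis norm_mult norm_triangle_ineq4)
qed

lemma norm_le_supnorm: "\<psi> \<in> Linf \<Longrightarrow> cmod (\<psi> v) \<le> supnorm \<psi>"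
  unfolding Linf_def supnorm_def by (auto intro: bounded_norm_le_SUP_norm)

lemma supnorm_nonneg: "\<psi> \<in> Linf \<Longrightarrow> supnorm \<psi> \<ge> 0"
  using norm_le_supnorm[of \<psi> undefined] norm_ge_zero order_trans by blast

lemma le_of_power_le_mult_power:
  fixes a c L :: real
  assumes "a \<ge> 0" "L > 0" and power_le: "\<And>n. a ^ n \<le> L * c ^ n"
  shows "a \<le> c"
proof (rule ccontr)
  assume "\<not> a \<le> c"
  have "0 \<le> L * c"
    using power_le[of 1] assms by simp
  then have "c \<ge> 0"
    using assms by (simp add: zero_le_mult_iff)
  then have "c > 0"
    using power_le[of 1] assms \<open>\<not> a \<le> c\<close> by (cases "c = 0") auto
  then have "1 < a / c"
    using \<open>\<not> a \<le> c\<close> by simp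
  then obtain n where "L < (a / c) ^ n"
    using real_arch_pow by blast
  moreover have "(a / c) ^ n \<le> L"
    using power_le[of n] \<open>c > 0\<close> by (simp add: power_divide divide_le_eq)
  ultimately show False
    by simp
qed

locale parent_tree =
  fixes r :: 'v and par :: "'v \<Rightarrow> 'v"
  assumes reaches_root: "\<forall>v. \<exists>n. (par ^^ n) v = r"
begin

abbreviation dep :: "'v \<Rightarrow> nat" where
  "dep \<equiv> depth r par"

lemma depth_root [simp]: "dep r = 0"
  unfolding depth_def by (rule Least_eq_0) simp

lemma funpow_depth: "(par ^^ dep v) v = r"
  unfolding depth_def using reaches_root by (meson LeastI)

lemma depth_par:
  assumes "v \<noteq> r"
  shows "dep v = Suc (dep (par v))"
proof -
  have "dep v \<noteq> 0"
    using funpow_depth[of v] assms by (metis funpow_0)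
  then obtain m where m: "dep v = Suc m"
    using not0_implies_Suc by blast
  have "(par ^^ m) (par v) = r"
    using funpow_depth[of v] m by (simp add: funpow_Suc_right del: funpow.simps)
  then have "dep (par v) \<le> m"
    unfolding depth_def by (rule Least_le)
  moreover have "(par ^^ Suc (dep (par v))) v = r"
    using funpow_depth[of "par v"] by (simp add: funpow_Suc_right del: funpow.simps)
  then have "dep v \<le> Suc (dep (par v))"
    unfolding depth_def by (rule Least_le)
  ultimately show ?thesis
    using m by simp
qed

lemma depth_eq_0_iff: "dep v = 0 \<longleftrightarrow> v = r"
  using depth_par by (cases "v = r") auto

lemma parent_induct [case_names root child]:
  assumes "P r" and "\<And>v. v \<noteq> r \<Longrightarrow> P (par v) \<Longrightarrow> P v"
  shows "P v"
proof -
  have "\<forall>v. dep v = n \<longrightarrow> P v" for n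
  proof (induction n)
    case 0
    then show ?case
      using assms(1) depth_eq_0_iff by auto
  next
    case (Suc n)
    show ?case
    proof (intro allI impI)
      fix v
      assume "dep v = Suc n"
      moreover have "v \<noteq> r"
        using \<open>dep v = Suc n\<close> by auto
      ultimately have "dep (par v) = n"
        using depth_par[of v] by simp
      then show "P v"
        using Suc assms(2) \<open>v \<noteq> r\<close> by blast
    qed
  qed
  then show ?thesis
    by blast
qed

definition weight :: "nat \<Rightarrow> 'v \<Rightarrow> real" where
  "weight k v = real (dep v) * ell_prod k (real (dep v))"

lemma wdiff_eq: "wdiff r par k f v = weight k v * Dif par f v"
  unfolding wdiff_def weight_def ell_prod_def by simp

lemma weight_pos: "v \<noteq> r \<Longrightarrow> weight k v > 0"
  unfolding weight_def using ell_prod_of_nat_ge_1[of k "dep v"] depth_eq_0_iff[of v]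
  by (intro mult_pos_pos) auto

lemma weight_nonneg: "weight k v \<ge> 0"
  unfolding weight_def using ell_prod_of_nat_ge_1[of k "dep v"] by simp

lemma weight_Suc: "weight (Suc k) v = weight k v * ell k (real (dep v))"
  unfolding weight_def ell_prod_Suc by simp

lemma wdiff_nonneg: "wdiff r par k f v \<ge> 0"
  unfolding wdiff_eq by (intro mult_nonneg_nonneg weight_nonneg Dif_nonneg)

abbreviation wsup :: "nat \<Rightarrow> ('v \<Rightarrow> complex) \<Rightarrow> real" where
  "wsup k f \<equiv> Sup (insert 0 (wdiff r par k f ` (UNIV - {r})))"

lemma normk_eq: "normk r par k f = cmod (f r) + wsup k f"
  unfolding normk_def by simp

lemma wdiff_le_wsup: "f \<in> Lk r par k \<Longrightarrow> v \<noteq> r \<Longrightarrow> wdiff r par k f v \<le> wsup k f"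
  unfolding Lk_def by (intro cSup_upper) auto

lemma wsup_nonneg: "f \<in> Lk r par k \<Longrightarrow> wsup k f \<ge> 0"
  unfolding Lk_def by (intro cSup_upper) auto

lemma wsup_least: "c \<ge> 0 \<Longrightarrow> (\<And>v. v \<noteq> r \<Longrightarrow> wdiff r par k f v \<le> c) \<Longrightarrow> wsup k f \<le> c"
  by (intro cSup_least) auto

lemma LkI: "(\<And>v. v \<noteq> r \<Longrightarrow> wdiff r par k f v \<le> c) \<Longrightarrow> f \<in> Lk r par k"
  unfolding Lk_def bdd_above_def by auto

lemma normk_nonneg: "f \<in> Lk r par k \<Longrightarrow> normk r par k f \<ge> 0"
  using wsup_nonneg normk_eq by (metis add_nonneg_nonneg norm_ge_zero)

lemma wdiff_le_normk: "f \<in> Lk r par k \<Longrightarrow> v \<noteq> r \<Longrightarrow> wdiff r par k f v \<le> normk r par k f"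
  using wdiff_le_wsup[of f k v] normk_eq[of k f] norm_ge_zero[of "f r"] by linarith

lemma Dif_le_div_weight: "v \<noteq> r \<Longrightarrow> wdiff r par k f v \<le> c \<Longrightarrow> Dif par f v \<le> c / weight k v"
  using weight_pos[of v k] by (simp add: wdiff_eq field_simps mult.commute)

lemma normk_const: "normk r par k (\<lambda>v. c) = cmod c"
proof -
  have "wdiff r par k (\<lambda>v. c) v = 0" for v
    unfolding wdiff_eq Dif_def by simp
  then have "wsup k (\<lambda>v. c) = 0"
    by (simp add: cSup_singleton image_constant_conv)
  then show ?thesis
    unfolding normk_eq by simp
qed

lemma const_Lk0: "(\<lambda>v. c) \<in> Lk0 r par k"
  unfolding Lk0_def by (auto intro: LkI[of _ _ 0] simp: wdiff_eq Dif_def)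

lemma normk_pos:
  assumes f: "f \<in> Lk r par k" and nonzero: "f \<noteq> (\<lambda>v. 0)"
  shows "normk r par k f > 0"
proof (rule ccontr)
  assume "\<not> normk r par k f > 0"
  then have "cmod (f r) = 0" and wsup_0: "wsup k f \<le> 0"
    using wsup_nonneg[OF f] normk_eq[of k f] norm_ge_zero[of "f r"] by linarith+
  then have "f r = 0"
    by simp
  have "f v = 0" for v
  proof (induction v rule: parent_induct)
    case (child v)
    then have "Dif par f v \<le> 0"
      using Dif_le_div_weight[OF child(1) order_trans[OF wdiff_le_wsup[OF f child(1)] wsup_0]]
      by simp
    then show ?case
      using child(2) Dif_nonneg[of par f v] unfolding Dif_def by simp
  qed (fact \<open>f r = 0\<close>)
  then show False
    using nonzero by auto
qed

lemma Dif_le_ell_increment: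
  assumes k: "k \<ge> 1" and v: "v \<noteq> r" "dep (par v) \<ge> 1" and le_c: "wdiff r par k f v \<le> c"
  shows "Dif par f v \<le> c * (ell k (real (dep v)) - ell k (real (dep (par v))))"
proof -
  have c: "c \<ge> 0"
    using le_c wdiff_nonneg order_trans by blast
  have "Dif par f v \<le> c * (1 / weight k v)"
    using Dif_le_div_weight[OF v(1) le_c] by simp
  also have "\<dots> \<le> c * (ell k (real (dep v)) - ell k (real (dep (par v))))"
    using ell_increment_ge[OF v(2) k] c unfolding weight_def depth_par[OF v(1)]
    by (intro mult_left_mono) auto
  finally show ?thesis .
qed

text \<open>The hypothesis N \<ge> 1 is essential: ell_k(0) = ell_k(1), so the step from the root is
  not controlled by an increment of ell_k.\<close>

lemma norm_le_telescoping:
  assumes k: "k \<ge> 1" and N: "N \<ge> 1"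
    and base: "\<And>u. dep u = N \<Longrightarrow> cmod (f u) \<le> B"
    and wdiff_le: "\<And>v. v \<noteq> r \<Longrightarrow> dep v > N \<Longrightarrow> wdiff r par k f v \<le> c"
    and v: "dep v \<ge> N"
  shows "cmod (f v) \<le> B + c * (ell k (real (dep v)) - ell k (real N))"
proof -
  obtain m where "dep v = N + m"
    using v le_Suc_ex by blast
  then show ?thesis
  proof (induction m arbitrary: v)
    case 0
    then show ?case
      using base by simp
  next
    case (Suc m)
    then have "v \<noteq> r"
      by auto
    then have par_v: "dep (par v) = N + m"
      using depth_par[of v] Suc.prems by simp
    have "Dif par f v \<le> c * (ell k (real (dep v)) - ell k (real (dep (par v))))"
      using Dif_le_ell_increment[OF k \<open>v \<noteq> r\<close> _ wdiff_le] N par_v Suc.prems \<open>v \<noteq> r\<close> by simp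
    then show ?case
      using norm_le_norm_par_add_Dif[of f v par] Suc.IH[OF par_v] par_v
      by (simp add: algebra_simps)
  qed
qed

lemma norm_le_normk_mult_ell:
  assumes k: "k \<ge> 1" and f: "f \<in> Lk r par k"
  shows "cmod (f v) \<le> normk r par k f * ell k (real (dep v))"
proof (cases "v = r")
  case True
  then show ?thesis
    using wsup_nonneg[OF f] by (simp add: normk_eq)
next
  case False
  then have "dep v \<ge> 1"
    using depth_eq_0_iff[of v] by simp
  have "cmod (f u) \<le> cmod (f r) + wsup k f" if "dep u = 1" for u
  proof -
    have "u \<noteq> r"
      using that by auto
    then have "par u = r" and "weight k u = 1"
      using that depth_par[of u] depth_eq_0_iff[of "par u"]
      by (auto simp: weight_def ell_prod_def)
    then show ?thesis
      using norm_le_norm_par_add_Dif[of f u par] wdiff_le_wsup[OF f \<open>u \<noteq> r\<close>]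
      by (simp add: wdiff_eq)
  qed
  then have "cmod (f v) \<le> cmod (f r) + wsup k f + wsup k f * (ell k (real (dep v)) - 1)"
    using norm_le_telescoping[OF k order_refl, of f _ "wsup k f" v] wdiff_le_wsup[OF f]
      \<open>dep v \<ge> 1\<close> by simp
  also have "\<dots> \<le> normk r par k f * ell k (real (dep v))"
    using ell_of_nat_ge_1[of k "dep v"] unfolding normk_eq
    by (simp add: algebra_simps mult_le_cancel_left1)
  finally show ?thesis .
qed

lemma norm_little_o_ell_if_Lk0:
  assumes k: "k \<ge> 1" and f: "f \<in> Lk0 r par k" and \<epsilon>: "\<epsilon> > 0"
  shows "\<exists>N. \<forall>v. dep v \<ge> N \<longrightarrow> cmod (f v) \<le> \<epsilon> * ell k (real (dep v))"
proof -
  have f_Lk: "f \<in> Lk r par k"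
    using f unfolding Lk0_def by blast
  have "\<exists>N. \<forall>v. v \<noteq> r \<and> dep v \<ge> N \<longrightarrow> wdiff r par k f v < \<epsilon> / 2"
    using f \<epsilon> unfolding Lk0_def by (simp del: less_divide_eq_numeral1)
  then obtain N0 where N0: "\<And>v. v \<noteq> r \<Longrightarrow> dep v \<ge> N0 \<Longrightarrow> wdiff r par k f v < \<epsilon> / 2"
    by blast
  define N1 where "N1 = max N0 1"
  define A where "A = normk r par k f * ell k (real N1)"
  have telescoped: "cmod (f v) \<le> A + \<epsilon> / 2 * ell k (real (dep v))" if "dep v \<ge> N1" for v
  proof -
    have "cmod (f v) \<le> A + \<epsilon> / 2 * (ell k (real (dep v)) - ell k (real N1))"
    proof (rule norm_le_telescoping[OF k _ _ _ that])
      show "N1 \<ge> 1"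
        unfolding N1_def by simp
      show "cmod (f u) \<le> A" if "dep u = N1" for u
        using norm_le_normk_mult_ell[OF k f_Lk, of u] that unfolding A_def by simp
      show "wdiff r par k f u \<le> \<epsilon> / 2" if "u \<noteq> r" "dep u > N1" for u
        using N0[of u] that unfolding N1_def by simp
    qed
    moreover have "0 \<le> \<epsilon> / 2 * ell k (real N1)"
      using \<epsilon> ell_of_nat_ge_1[of k N1] by simp
    ultimately show ?thesis
      by (simp add: right_diff_distrib)
  qed
  have "\<forall>\<^sub>F n in sequentially. 2 * A / \<epsilon> \<le> ell k (real n)"
    using filterlim_compose[OF filterlim_ell_at_top[OF k] filterlim_real_sequentially]
    by (simp add: filterlim_at_top)
  then obtain N2 where N2: "\<And>n. n \<ge> N2 \<Longrightarrow> 2 * A / \<epsilon> \<le> ell k (real n)"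
    unfolding eventually_sequentially by blast
  show ?thesis
  proof (intro exI allI impI)
    fix v
    assume "max N1 N2 \<le> dep v"
    then have "A \<le> \<epsilon> / 2 * ell k (real (dep v))"
      using N2[of "dep v"] \<epsilon> by (simp add: field_simps)
    then show "cmod (f v) \<le> \<epsilon> * ell k (real (dep v))"
      using telescoped[of v] \<open>max N1 N2 \<le> dep v\<close> by simp
  qed
qed

lemma wdiff_mult_le:
  assumes \<psi>: "\<psi> \<in> Linf" and v: "v \<noteq> r" and B: "B \<ge> 0"
    and f_par: "cmod (f (par v)) \<le> B * ell k (real (dep (par v)))"
  shows "wdiff r par k (\<lambda>u. \<psi> u * f u) v
           \<le> supnorm \<psi> * wdiff r par k f v + B * wdiff r par (Suc k) \<psi> v"
proof -
  have "ell k (real (dep (par v))) \<le> ell k (real (dep v))"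
    using depth_par[OF v] by (intro ell_mono_nat) simp
  then have f_par': "cmod (f (par v)) \<le> B * ell k (real (dep v))"
    using f_par B by (meson mult_left_mono order_trans)
  have "wdiff r par k (\<lambda>u. \<psi> u * f u) v
      \<le> weight k v * (cmod (\<psi> v) * Dif par f v + cmod (f (par v)) * Dif par \<psi> v)"
    unfolding wdiff_eq by (intro mult_left_mono Dif_mult_le weight_nonneg)
  also have "\<dots> \<le> weight k v * (supnorm \<psi> * Dif par f v + B * ell k (real (dep v)) * Dif par \<psi> v)"
    using norm_le_supnorm[OF \<psi>, of v] f_par'
    by (intro mult_left_mono add_mono mult_right_mono weight_nonneg Dif_nonneg)
  also have "\<dots> = supnorm \<psi> * wdiff r par k f v + B * wdiff r par (Suc k) \<psi> v"
    unfolding wdiff_eq weight_Suc by (simp add: algebra_simps)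
  finally show ?thesis .
qed

lemma mult_Lk:
  assumes k: "k \<ge> 1" and \<psi>: "\<psi> \<in> Linf" "\<psi> \<in> Lk r par (Suc k)" and f: "f \<in> Lk r par k"
  shows "(\<lambda>u. \<psi> u * f u) \<in> Lk r par k"
    and "normk r par k (\<lambda>u. \<psi> u * f u) \<le> (supnorm \<psi> + wsup (Suc k) \<psi>) * normk r par k f"
proof -
  define c where "c = supnorm \<psi> * wsup k f + normk r par k f * wsup (Suc k) \<psi>"
  have wdiff_le_c: "wdiff r par k (\<lambda>u. \<psi> u * f u) v \<le> c" if v: "v \<noteq> r" for v
  proof -
    have "wdiff r par k (\<lambda>u. \<psi> u * f u) v
        \<le> supnorm \<psi> * wdiff r par k f v + normk r par k f * wdiff r par (Suc k) \<psi> v"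
      using wdiff_mult_le[where f = f, OF \<psi>(1) v normk_nonneg[OF f] norm_le_normk_mult_ell[OF k f, of "par v"]] .
    also have "\<dots> \<le> c"
      unfolding c_def using wdiff_le_wsup[OF f v] wdiff_le_wsup[OF \<psi>(2) v]
        supnorm_nonneg[OF \<psi>(1)] normk_nonneg[OF f]
      by (intro add_mono mult_left_mono)
    finally show ?thesis .
  qed
  then show "(\<lambda>u. \<psi> u * f u) \<in> Lk r par k"
    by (rule LkI)
  have "c \<ge> 0"
    unfolding c_def using supnorm_nonneg[OF \<psi>(1)] wsup_nonneg[OF f] normk_nonneg[OF f]
      wsup_nonneg[OF \<psi>(2)] by simp
  then have "wsup k (\<lambda>u. \<psi> u * f u) \<le> c"
    using wdiff_le_c by (rule wsup_least)
  moreover have "cmod (\<psi> r * f r) \<le> supnorm \<psi> * cmod (f r)"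
    using norm_le_supnorm[OF \<psi>(1), of r] by (simp add: norm_mult mult_right_mono)
  ultimately have "normk r par k (\<lambda>u. \<psi> u * f u) \<le> supnorm \<psi> * cmod (f r) + c"
    unfolding normk_eq by simp
  also have "\<dots> = (supnorm \<psi> + wsup (Suc k) \<psi>) * normk r par k f"
    unfolding c_def normk_eq by (simp add: algebra_simps)
  finally show "normk r par k (\<lambda>u. \<psi> u * f u) \<le> (supnorm \<psi> + wsup (Suc k) \<psi>) * normk r par k f" .
qed

lemma mult_Lk0:
  assumes k: "k \<ge> 1" and \<psi>: "\<psi> \<in> Linf" "\<psi> \<in> Lk r par (Suc k)" and f: "f \<in> Lk0 r par k"
  shows "(\<lambda>u. \<psi> u * f u) \<in> Lk0 r par k"
proof -
  have f_Lk: "f \<in> Lk r par k"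
    using f unfolding Lk0_def by blast
  define a where "a = supnorm \<psi> + wsup (Suc k) \<psi>"
  have a: "a \<ge> 0"
    unfolding a_def using supnorm_nonneg[OF \<psi>(1)] wsup_nonneg[OF \<psi>(2)] by simp
  have "\<exists>N. \<forall>v. v \<noteq> r \<and> dep v \<ge> N \<longrightarrow> wdiff r par k (\<lambda>u. \<psi> u * f u) v < \<epsilon>"
    if \<epsilon>: "\<epsilon> > 0" for \<epsilon>
  proof -
    define \<delta> where "\<delta> = \<epsilon> / (a + 1)"
    have \<delta>: "\<delta> > 0"
      unfolding \<delta>_def using \<epsilon> a by simp
    have "\<exists>N. \<forall>v. v \<noteq> r \<and> dep v \<ge> N \<longrightarrow> wdiff r par k f v < \<delta>"
      using f \<delta> unfolding Lk0_def by simp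
    then obtain N1 where N1: "\<And>v. v \<noteq> r \<Longrightarrow> dep v \<ge> N1 \<Longrightarrow> wdiff r par k f v < \<delta>"
      by blast
    obtain N2 where N2: "\<And>v. dep v \<ge> N2 \<Longrightarrow> cmod (f v) \<le> \<delta> * ell k (real (dep v))"
      using norm_little_o_ell_if_Lk0[OF k f \<delta>] by blast
    show ?thesis
    proof (intro exI allI impI)
      fix v
      assume v: "v \<noteq> r \<and> max N1 (Suc N2) \<le> dep v"
      then have "dep (par v) \<ge> N2"
        using depth_par[of v] by simp
      then have "wdiff r par k (\<lambda>u. \<psi> u * f u) v
          \<le> supnorm \<psi> * wdiff r par k f v + \<delta> * wdiff r par (Suc k) \<psi> v"
        using wdiff_mult_le[where f = f, OF \<psi>(1) _ _ N2[of "par v"]] v \<delta> by simp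
      also have "\<dots> \<le> supnorm \<psi> * \<delta> + \<delta> * wsup (Suc k) \<psi>"
        using N1[of v] v wdiff_le_wsup[OF \<psi>(2), of v] supnorm_nonneg[OF \<psi>(1)] \<delta>
        by (intro add_mono mult_left_mono) auto
      also have "\<dots> = \<delta> * a"
        unfolding a_def by (simp add: algebra_simps)
      also have "\<dots> < \<epsilon>"
        unfolding \<delta>_def using \<epsilon> a by (simp add: field_simps)
      finally show "wdiff r par k (\<lambda>u. \<psi> u * f u) v < \<epsilon>" .
    qed
  qed
  then show ?thesis
    unfolding Lk0_def using mult_Lk(1)[OF k \<psi> f_Lk] by blast
qed

lemma mult_closed_if_Linf_Lk_Suc:
  assumes k: "k \<ge> 1" and \<psi>: "\<psi> \<in> Linf" "\<psi> \<in> Lk r par (Suc k)"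
    and X: "X \<in> {Lk r par k, Lk0 r par k}" and f: "f \<in> X"
  shows "(\<lambda>v. \<psi> v * f v) \<in> X"
    and "normk r par k (\<lambda>v. \<psi> v * f v) \<le> (supnorm \<psi> + wsup (Suc k) \<psi>) * normk r par k f"
  using X f mult_Lk[OF k \<psi>] mult_Lk0[OF k \<psi>] unfolding Lk0_def by auto

definition ell_trunc :: "nat \<Rightarrow> nat \<Rightarrow> 'v \<Rightarrow> complex" where
  "ell_trunc k N v = complex_of_real (ell k (real (min (dep v) N)))"

lemma wdiff_ell_trunc_eq:
  assumes v: "v \<noteq> r"
  shows "wdiff r par k (ell_trunc k N) v
           = (if dep v \<le> N then weight k v * (ell k (real (dep v)) - ell k (real (dep (par v))))
              else 0)"
proof -
  have dv: "dep v = Suc (dep (par v))"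
    using depth_par[OF v] .
  show ?thesis
  proof (cases "dep v \<le> N")
    case True
    moreover have "ell k (real (dep (par v))) \<le> ell k (real (dep v))"
      using dv by (intro ell_mono_nat) simp
    ultimately show ?thesis
      unfolding wdiff_eq Dif_def ell_trunc_def using dv by (simp flip: of_real_diff)
  next
    case False
    then have "min (dep v) N = N" and "min (dep (par v)) N = N"
      using dv by auto
    then show ?thesis
      unfolding wdiff_eq Dif_def ell_trunc_def using False by simp
  qed
qed

lemma wdiff_ell_trunc_le: "wdiff r par k (ell_trunc k N) v \<le> 2 ^ Suc k"
proof (cases "v = r")
  case True
  then show ?thesis
    by (simp add: wdiff_eq weight_def)
next
  case False
  define m where "m = dep (par v)"
  have dv: "dep v = Suc m"
    using depth_par[OF False] m_def by simp
  show ?thesis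
  proof (cases "m = 0")
    case True
    then show ?thesis
      using wdiff_ell_trunc_eq[OF False] dv m_def by simp
  next
    case False
    then show ?thesis
      using wdiff_ell_trunc_eq[OF \<open>v \<noteq> r\<close>] weighted_ell_increment_le[of m k] dv m_def
      unfolding weight_def by auto
  qed
qed

lemma ell_trunc_Lk0: "ell_trunc k N \<in> Lk0 r par k"
  unfolding Lk0_def
proof (intro CollectI conjI allI impI)
  show "ell_trunc k N \<in> Lk r par k"
    using wdiff_ell_trunc_le by (rule LkI)
  show "\<exists>N'. \<forall>v. v \<noteq> r \<and> dep v \<ge> N' \<longrightarrow> wdiff r par k (ell_trunc k N) v < \<epsilon>"
    if "\<epsilon> > 0" for \<epsilon> :: real
    using that wdiff_ell_trunc_eq by (intro exI[of _ "Suc N"]) auto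
qed

lemma normk_ell_trunc_le: "normk r par k (ell_trunc k N) \<le> 1 + 2 ^ Suc k"
proof -
  have "wsup k (ell_trunc k N) \<le> 2 ^ Suc k"
    by (rule wsup_least) (use wdiff_ell_trunc_le in auto)
  then show ?thesis
    unfolding normk_eq ell_trunc_def by simp
qed

lemma norm_le_of_mult_bounded:
  assumes k: "k \<ge> 1" and X: "X \<subseteq> Lk r par k" "(\<lambda>v. 1) \<in> X"
    and closed: "\<And>f. f \<in> X \<Longrightarrow> (\<lambda>v. \<psi> v * f v) \<in> X"
    and bounded: "\<And>f. f \<in> X \<Longrightarrow> normk r par k (\<lambda>v. \<psi> v * f v) \<le> C * normk r par k f"
  shows "cmod (\<psi> v) \<le> C"
proof -
  have "\<psi> \<in> X"
    using closed[OF X(2)] by simp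
  then have "C \<ge> 0"
    using bounded[OF X(2)] normk_nonneg[of \<psi> k] X(1) normk_const[of k 1] by auto
  have powers: "(\<lambda>v. \<psi> v ^ n) \<in> X \<and> normk r par k (\<lambda>v. \<psi> v ^ n) \<le> C ^ n" for n
  proof (induction n)
    case 0
    then show ?case
      using X(2) normk_const[of k 1] by simp
  next
    case (Suc n)
    then have "normk r par k (\<lambda>v. \<psi> v ^ Suc n) \<le> C * C ^ n"
      using bounded[of "\<lambda>v. \<psi> v ^ n"] \<open>C \<ge> 0\<close> by (auto intro: order_trans mult_left_mono)
    then show ?case
      using closed[of "\<lambda>v. \<psi> v ^ n"] Suc by simp
  qed
  show ?thesis
  proof (rule le_of_power_le_mult_power[where L = "ell k (real (dep v))"])
    show "0 < ell k (real (dep v))"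
      using ell_of_nat_ge_1[of k "dep v"] by simp
    fix n
    have "cmod (\<psi> v ^ n) \<le> normk r par k (\<lambda>v. \<psi> v ^ n) * ell k (real (dep v))"
      using norm_le_normk_mult_ell[OF k, of "\<lambda>v. \<psi> v ^ n" v] powers X(1) by blast
    also have "\<dots> \<le> C ^ n * ell k (real (dep v))"
      using powers ell_of_nat_ge_1[of k "dep v"] by (intro mult_right_mono) auto
    finally show "cmod (\<psi> v) ^ n \<le> ell k (real (dep v)) * C ^ n"
      by (simp add: norm_power mult.commute)
  qed simp
qed

lemma Linf_Lk_Suc_if_mult_bounded:
  assumes k: "k \<ge> 1" and X: "Lk0 r par k \<subseteq> X" "X \<subseteq> Lk r par k"
    and bounded: "mult_bounded_on X (normk r par k) \<psi>"
  shows "\<psi> \<in> Linf" and "\<psi> \<in> Lk r par (Suc k)"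
proof -
  obtain C where closed: "\<And>f. f \<in> X \<Longrightarrow> (\<lambda>v. \<psi> v * f v) \<in> X"
    and C: "\<And>f. f \<in> X \<Longrightarrow> normk r par k (\<lambda>v. \<psi> v * f v) \<le> C * normk r par k f"
    using bounded unfolding mult_bounded_on_def by blast
  have one: "(\<lambda>v. 1) \<in> X"
    using X const_Lk0 by blast
  have \<psi>_le: "cmod (\<psi> v) \<le> C" for v
    using norm_le_of_mult_bounded[OF k X(2) one closed C] .
  then show "\<psi> \<in> Linf"
    unfolding Linf_def bounded_iff by auto
  have "C \<ge> 0"
    using \<psi>_le[of r] norm_ge_zero order_trans by blast
  define K :: real where "K = 2 ^ Suc k"
  have "wdiff r par (Suc k) \<psi> v \<le> C * (1 + K) + C * K" if v: "v \<noteq> r" for v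
  proof -
    define g where "g = ell_trunc k (dep v)"
    have g: "g \<in> X"
      using X ell_trunc_Lk0 unfolding g_def by blast
    have "cmod (g v) = ell k (real (dep v))"
      unfolding g_def ell_trunc_def using ell_of_nat_ge_1[of k "dep v"] by simp
    then have "wdiff r par (Suc k) \<psi> v = weight k v * (cmod (g v) * Dif par \<psi> v)"
      unfolding wdiff_eq weight_Suc by (simp add: algebra_simps)
    also have "\<dots> \<le> weight k v * (Dif par (\<lambda>u. \<psi> u * g u) v + cmod (\<psi> (par v)) * Dif par g v)"
      by (intro mult_left_mono norm_mult_Dif_le weight_nonneg)
    also have "\<dots> = wdiff r par k (\<lambda>u. \<psi> u * g u) v + cmod (\<psi> (par v)) * wdiff r par k g v"
      unfolding wdiff_eq by (simp add: algebra_simps)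
    also have "\<dots> \<le> C * (1 + K) + C * K"
    proof (rule add_mono)
      have "wdiff r par k (\<lambda>u. \<psi> u * g u) v \<le> normk r par k (\<lambda>u. \<psi> u * g u)"
        using wdiff_le_normk[OF _ v] closed[OF g] X(2) by blast
      also have "\<dots> \<le> C * normk r par k g"
        by (rule C[OF g])
      also have "\<dots> \<le> C * (1 + K)"
        unfolding g_def K_def using normk_ell_trunc_le \<open>C \<ge> 0\<close> by (intro mult_left_mono)
      finally show "wdiff r par k (\<lambda>u. \<psi> u * g u) v \<le> C * (1 + K)" .
      show "cmod (\<psi> (par v)) * wdiff r par k g v \<le> C * K"
        unfolding g_def K_def using \<psi>_le wdiff_ell_trunc_le wdiff_nonneg \<open>C \<ge> 0\<close>
        by (intro mult_mono)
    qed
    finally show ?thesis .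
  qed
  then show "\<psi> \<in> Lk r par (Suc k)"
    by (rule LkI)
qed

lemma normk_mult_le_mult_opnorm:
  assumes X: "X \<subseteq> Lk r par k" and f: "f \<in> X"
    and bounded: "\<And>f. f \<in> X \<Longrightarrow> normk r par k (\<lambda>v. \<psi> v * f v) \<le> U * normk r par k f"
  shows "normk r par k (\<lambda>v. \<psi> v * f v) \<le> mult_opnorm X (normk r par k) \<psi> * normk r par k f"
proof (cases "f = (\<lambda>v. 0)")
  case True
  then show ?thesis
    using normk_const[of k 0] by simp
next
  case False
  have pos: "normk r par k f > 0"
    using normk_pos False f X by blast
  have "bdd_above ((\<lambda>f. normk r par k (\<lambda>v. \<psi> v * f v) / normk r par k f) ` (X - {\<lambda>v. 0}))"
    using bounded normk_pos X by (intro bdd_aboveI2[of _ _ U]) (auto simp: pos_divide_le_eq)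
  then have "normk r par k (\<lambda>v. \<psi> v * f v) / normk r par k f \<le> mult_opnorm X (normk r par k) \<psi>"
    unfolding mult_opnorm_def using f False by (intro cSUP_upper) auto
  then show ?thesis
    using pos by (simp add: pos_divide_le_eq)
qed

lemma mult_opnorm_le:
  assumes X: "X \<subseteq> Lk r par k" "(\<lambda>v. 1) \<in> X"
    and bounded: "\<And>f. f \<in> X \<Longrightarrow> normk r par k (\<lambda>v. \<psi> v * f v) \<le> U * normk r par k f"
  shows "mult_opnorm X (normk r par k) \<psi> \<le> U"
  unfolding mult_opnorm_def
proof (rule cSUP_least)
  have "(\<lambda>v. 1) \<noteq> (\<lambda>v. 0 :: complex)"
    by (metis one_neq_zero)
  then show "X - {\<lambda>v. 0} \<noteq> {}"
    using X(2) by blast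
  show "normk r par k (\<lambda>v. \<psi> v * f v) / normk r par k f \<le> U" if "f \<in> X - {\<lambda>v. 0}" for f
    using that bounded[of f] normk_pos[of f k] X(1) by (auto simp: pos_divide_le_eq)
qed

lemma mult_opnorm_bounds:
  assumes k: "k \<ge> 1" and X: "Lk0 r par k \<subseteq> X" "X \<subseteq> Lk r par k"
    and closed: "\<And>f. f \<in> X \<Longrightarrow> (\<lambda>v. \<psi> v * f v) \<in> X"
    and bounded: "\<And>f. f \<in> X \<Longrightarrow> normk r par k (\<lambda>v. \<psi> v * f v) \<le> U * normk r par k f"
  shows "max (supnorm \<psi>) (normk r par k \<psi>) \<le> mult_opnorm X (normk r par k) \<psi>"
    and "mult_opnorm X (normk r par k) \<psi> \<le> U"
proof -
  have one: "(\<lambda>v. 1) \<in> X"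
    using X const_Lk0 by blast
  show "mult_opnorm X (normk r par k) \<psi> \<le> U"
    by (rule mult_opnorm_le[OF X(2) one bounded])
  have opnorm_bound: "normk r par k (\<lambda>v. \<psi> v * f v)
      \<le> mult_opnorm X (normk r par k) \<psi> * normk r par k f" if "f \<in> X" for f
    using normk_mult_le_mult_opnorm[OF X(2) that bounded] .
  have "normk r par k \<psi> \<le> mult_opnorm X (normk r par k) \<psi>"
    using opnorm_bound[OF one] normk_const[of k 1] by simp
  moreover have "supnorm \<psi> \<le> mult_opnorm X (normk r par k) \<psi>"
    unfolding supnorm_def using norm_le_of_mult_bounded[OF k X(2) one closed opnorm_bound]
    by (intro cSUP_least) auto
  ultimately show "max (supnorm \<psi>) (normk r par k \<psi>) \<le> mult_opnorm X (normk r par k) \<psi>"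
    by simp
qed

end

theorem theorem3p1:
  fixes r :: 'v and par :: "'v \<Rightarrow> 'v" and k :: nat and \<psi> :: "'v \<Rightarrow> complex"
  assumes "rooted_tree r par" and "k \<ge> 1"
  shows "(mult_bounded_on (Lk r par k) (normk r par k) \<psi>
            \<longleftrightarrow> mult_bounded_on (Lk0 r par k) (normk r par k) \<psi>)
       \<and> (mult_bounded_on (Lk0 r par k) (normk r par k) \<psi>
            \<longleftrightarrow> \<psi> \<in> Linf \<inter> Lk r par (Suc k))
       \<and> (\<psi> \<in> Linf \<inter> Lk r par (Suc k) \<longrightarrow>
           (\<forall>X \<in> {Lk r par k, Lk0 r par k}.
              max (supnorm \<psi>) (normk r par k \<psi>) \<le> mult_opnorm X (normk r par k) \<psi>
            \<and> mult_opnorm X (normk r par k) \<psi>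
                \<le> supnorm \<psi> + Sup (insert 0 ((\<lambda>v. real (depth r par v)
                     * (\<Prod>j\<in>{1..k}. ell j (real (depth r par v))) * Dif par \<psi> v)
                     ` (UNIV - {r})))))"
proof -
  interpret parent_tree r par
    using assms(1) unfolding rooted_tree_def parent_tree_def by blast
  note k = assms(2)
  have "{..<Suc k} = insert 0 {1..k}"
    by auto
  then have wsup_eq: "(\<lambda>v. real (depth r par v) * (\<Prod>j\<in>{1..k}. ell j (real (depth r par v)))
      * Dif par \<psi> v) = wdiff r par (Suc k) \<psi>"
    by (simp add: wdiff_def fun_eq_iff)
  define U where "U = supnorm \<psi> + wsup (Suc k) \<psi>"
  have spaces: "Lk0 r par k \<subseteq> X" "X \<subseteq> Lk r par k" if "X \<in> {Lk r par k, Lk0 r par k}" for X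
    using that unfolding Lk0_def by auto
  have sufficient: "(\<lambda>v. \<psi> v * f v) \<in> X \<and> normk r par k (\<lambda>v. \<psi> v * f v) \<le> U * normk r par k f"
    if "\<psi> \<in> Linf \<inter> Lk r par (Suc k)" "X \<in> {Lk r par k, Lk0 r par k}" "f \<in> X" for X f
    using mult_closed_if_Linf_Lk_Suc[OF k _ _ that(2,3)] that(1) unfolding U_def by blast
  have characterisation: "mult_bounded_on X (normk r par k) \<psi> \<longleftrightarrow> \<psi> \<in> Linf \<inter> Lk r par (Suc k)"
    if "X \<in> {Lk r par k, Lk0 r par k}" for X
    using Linf_Lk_Suc_if_mult_bounded[OF k spaces[OF that]] sufficient[OF _ that]
    unfolding mult_bounded_on_def by blast
  have "max (supnorm \<psi>) (normk r par k \<psi>) \<le> mult_opnorm X (normk r par k) \<psi>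
      \<and> mult_opnorm X (normk r par k) \<psi> \<le> U"
    if "\<psi> \<in> Linf \<inter> Lk r par (Suc k)" "X \<in> {Lk r par k, Lk0 r par k}" for X
    using mult_opnorm_bounds[OF k spaces[OF that(2)]] sufficient[OF that] by blast
  then show ?thesis
    using characterisation unfolding wsup_eq U_def by blast
qed

end
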